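(* Let $K\ge1$, fix $j\in\{1,\dots,K\}$, let $\lambda_j>0$, $\mu_j>0$ and $\rho_j=\lambda_j/\mu_j$. Let $f:\mathbb{Z}_{\ge0}^K\to\mathbb{R}$ be any function. For $\bar q=(q_1,\dots,q_K)\in\mathbb{Z}_{\ge0}^K$ define $$H(\bar q)=\frac{1}{\mu_j}\cdot\frac{1}{\rho_j}\sum_{i=1}^{q_j}\sum_{m=0}^{q_j-i} f\big(\bar q-(i+m)e_j\big)\frac{(q_j-i)!}{(q_j-i-m)!}\rho_j^{-m},$$ where $e_j$ is the $j$-th unit vector (so $H(\bar q)=0$ when $q_j=0$). Then for every $\bar q\in\mathbb{Z}_{\ge0}^K$, $$\lambda_j\big(H(\bar q+e_j)-H(\bar q)\big)-\mu_j q_j\big(H(\bar q)-H(\bar q-e_j)\big)=f(\bar q),$$ where the second term is interpreted as $0$ when $q_j=0$. *)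

theory Defs
  imports Main "HOL.Real"
begin

text \<open>Vectors in Z_{\<ge>0}^K are functions from a finite index type 'k (with CARD('k) = K \<ge> 1)
 to nat. The vector q - n e_j is q(j := q j - n) (only used with n \<le> q j).\<close>

definition Hfun :: "real \<Rightarrow> real \<Rightarrow> 'k \<Rightarrow> (('k \<Rightarrow> nat) \<Rightarrow> real) \<Rightarrow> ('k \<Rightarrow> nat) \<Rightarrow> real" where
  "Hfun lam mu j f q =
     (let rho = lam / mu in
      (1 / mu) * (1 / rho) *
      (\<Sum>i = 1..q j. \<Sum>m = 0..q j - i.
          f (q(j := q j - (i + m))) * (fact (q j - i) / fact (q j - i - m)) * inverse (rho ^ m)))"

end

theory Submission
  imports Defs
begin

text \<open>Only the j-th coordinate moves, so write g l for f at q with q_j replaced by l and r for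
  \<lambda>_j/\<mu>_j. Substituting k = q_j - i and l = k - m turns H into (1/\<lambda>_j) \<Sum>_{k<q_j} A k with
  A k = \<Sum>_{l\<le>k} g l k!/l! r^(l-k). Then \<lambda>_j(H(q+e_j) - H(q)) = A q_j and
  \<mu>_j q_j (H(q) - H(q-e_j)) = (q_j/r) A (q_j - 1), and the recursion
  A (k+1) = g (k+1) + ((k+1)/r) A k shows that their difference is g q_j = f q.\<close>

definition fact_ratio_sum :: "real \<Rightarrow> (nat \<Rightarrow> real) \<Rightarrow> nat \<Rightarrow> real" where
  "fact_ratio_sum r g k = (\<Sum>l = 0..k. g l * (fact k / fact l) * inverse (r ^ (k - l)))"

lemma fact_ratio_sum_0 [simp]: "fact_ratio_sum r g 0 = g 0"
  by (simp add: fact_ratio_sum_def)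

lemma fact_ratio_sum_Suc:
  assumes "r \<noteq> 0"
  shows "fact_ratio_sum r g (Suc k) = g (Suc k) + real (Suc k) / r * fact_ratio_sum r g k"
proof -
  have "g l * (fact (Suc k) / fact l) * inverse (r ^ (Suc k - l))
      = real (Suc k) / r * (g l * (fact k / fact l) * inverse (r ^ (k - l)))"
    if "l \<le> k" for l
    using assms that by (simp add: Suc_diff_le field_simps)
  then show ?thesis
    by (simp add: fact_ratio_sum_def sum.atLeast0_atMost_Suc sum_distrib_left)
qed

lemma fact_ratio_sum_recurrence:
  assumes "r \<noteq> 0"
  shows "fact_ratio_sum r g n - (if n = 0 then 0 else real n / r * fact_ratio_sum r g (n - 1)) = g n"
  using fact_ratio_sum_Suc[OF assms] by (cases n) simp_all

lemma fact_ratio_sum_reflect: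
  "fact_ratio_sum r g k
     = (\<Sum>m = 0..k. g (k - m) * (fact k / fact (k - m)) * inverse (r ^ m))"
  unfolding fact_ratio_sum_def
  by (rule sum.reindex_bij_witness[of _ "\<lambda>l. k - l" "\<lambda>m. k - m"]) auto

lemma Hfun_eq_sum_fact_ratio_sum:
  assumes "mu \<noteq> 0"
  shows "Hfun lam mu j f (q(j := N))
           = 1 / lam * (\<Sum>k<N. fact_ratio_sum (lam / mu) (\<lambda>l. f (q(j := l))) k)"
proof -
  let ?A = "fact_ratio_sum (lam / mu) (\<lambda>l. f (q(j := l)))"
  have "(\<Sum>i = 1..N. \<Sum>m = 0..N - i.
           f (q(j := N - (i + m))) * (fact (N - i) / fact (N - i - m)) * inverse ((lam / mu) ^ m))
      = (\<Sum>i = 1..N. ?A (N - i))"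
    by (simp add: fact_ratio_sum_reflect diff_diff_left)
  also have "\<dots> = (\<Sum>k<N. ?A k)"
    by (rule sum.reindex_bij_witness[of _ "\<lambda>k. N - k" "\<lambda>i. N - i"]) auto
  finally show ?thesis
    using assms by (simp add: Hfun_def Let_def)
qed

theorem lemma3:
  fixes lam mu :: real and j :: "'k::finite" and f :: "('k \<Rightarrow> nat) \<Rightarrow> real" and q :: "'k \<Rightarrow> nat"
  assumes "lam > 0" and "mu > 0"
  shows "lam * (Hfun lam mu j f (q(j := q j + 1)) - Hfun lam mu j f q)
           - (if q j = 0 then 0
              else mu * real (q j) * (Hfun lam mu j f q - Hfun lam mu j f (q(j := q j - 1))))
         = f q"
proof -
  define n where "n = q j"
  define A where "A = fact_ratio_sum (lam / mu) (\<lambda>l. f (q(j := l)))"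
  have H: "Hfun lam mu j f (q(j := N)) = 1 / lam * (\<Sum>k<N. A k)" for N
    unfolding A_def using assms by (simp add: Hfun_eq_sum_fact_ratio_sum)
  have Hq: "Hfun lam mu j f q = 1 / lam * (\<Sum>k<n. A k)"
    using H[of n] by (simp add: n_def)
  have birth: "lam * (Hfun lam mu j f (q(j := q j + 1)) - Hfun lam mu j f q) = A n"
    using assms by (simp add: H Hq field_simps flip: n_def)
  have death: "mu * real n * (Hfun lam mu j f q - Hfun lam mu j f (q(j := n - 1)))
      = real n / (lam / mu) * A (n - 1)" if "n \<noteq> 0"
  proof -
    obtain p where "n = Suc p" using \<open>n \<noteq> 0\<close> not0_implies_Suc by blast
    then show ?thesis
      using assms by (simp add: H Hq field_simps)
  qed
  have recurrence: "A n - (if n = 0 then 0 else real n / (lam / mu) * A (n - 1)) = f q"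
    using fact_ratio_sum_recurrence[of "lam / mu"] assms unfolding A_def n_def by simp
  show ?thesis
  proof (cases "n = 0")
    case True
    then show ?thesis using birth recurrence by (simp add: n_def)
  next
    case False
    then show ?thesis using birth death recurrence by (simp add: n_def)
  qed
qed

end
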